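(* Let $K$ be an algebraically closed valued field and $L$ a valued field extension of $K$ of transcendence degree $1$. Let $c,d\in L\setminus K$. Then $E(c/K)=E(d/K)$.
   Context: For $c\in L$, $T(c/K)=\{\mathrm{val}(c-b): b\in K\}$, and $E(c/K)=\{e\in\mathrm{val}(K): e+T(c/K)=T(c/K)\}$ is the stabilizer of $T(c/K)$ in the value group of $K$. *)

theory Defs
  imports "HOL-Computational_Algebra.Polynomial"
begin

text \<open>Subfields of an ambient field (the ambient field plays the role of L).\<close>
definition is_subfield :: "'a::field set \<Rightarrow> bool" where
  "is_subfield F \<longleftrightarrow> 0 \<in> F \<and> 1 \<in> F \<and>
     (\<forall>x\<in>F. \<forall>y\<in>F. x + y \<in> F \<and> x * y \<in> F) \<and>
     (\<forall>x\<in>F. - x \<in> F) \<and> (\<forall>x\<in>F. x \<noteq> 0 \<longrightarrow> inverse x \<in> F)"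

definition gen_subfield :: "'a::field set \<Rightarrow> 'a set" where
  "gen_subfield S = \<Inter>{F. is_subfield F \<and> S \<subseteq> F}"

definition poly_over :: "'a::field set \<Rightarrow> 'a poly \<Rightarrow> bool" where
  "poly_over F p \<longleftrightarrow> (\<forall>i. coeff p i \<in> F)"

definition algebraic_over :: "'a::field set \<Rightarrow> 'a \<Rightarrow> bool" where
  "algebraic_over F x \<longleftrightarrow> (\<exists>p. p \<noteq> 0 \<and> poly_over F p \<and> poly p x = 0)"

definition alg_closed_subfield :: "'a::field set \<Rightarrow> bool" where
  "alg_closed_subfield F \<longleftrightarrow> is_subfield F \<and>
     (\<forall>p. poly_over F p \<and> degree p \<ge> 1 \<longrightarrow> (\<exists>x\<in>F. poly p x = 0))"

text \<open>The whole field (UNIV) has transcendence degree 1 over K: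
  it has a transcendence basis over K consisting of a single element t.\<close>
definition trdeg_one_over :: "'a::field set \<Rightarrow> bool" where
  "trdeg_one_over K \<longleftrightarrow> (\<exists>t. \<not> algebraic_over K t \<and>
      (\<forall>x. algebraic_over (gen_subfield (insert t K)) x))"

text \<open>Krull valuation on the field, given on nonzero elements, with values
  in an ordered abelian group (value at 0, i.e. infinity, is irrelevant).\<close>
definition valuation :: "('a::field \<Rightarrow> 'g::linordered_ab_group_add) \<Rightarrow> bool" where
  "valuation v \<longleftrightarrow>
     (\<forall>x y. x \<noteq> 0 \<longrightarrow> y \<noteq> 0 \<longrightarrow> v (x * y) = v x + v y) \<and>
     (\<forall>x y. x \<noteq> 0 \<longrightarrow> y \<noteq> 0 \<longrightarrow> x + y \<noteq> 0 \<longrightarrow> min (v x) (v y) \<le> v (x + y))"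

definition value_group :: "('a::field \<Rightarrow> 'g::linordered_ab_group_add) \<Rightarrow> 'a set \<Rightarrow> 'g set" where
  "value_group v K = v ` (K - {0})"

definition cutT :: "('a::field \<Rightarrow> 'g::linordered_ab_group_add) \<Rightarrow> 'a set \<Rightarrow> 'a \<Rightarrow> 'g set" where
  "cutT v K c = {v (c - b) | b. b \<in> K}"

text \<open>E(c/K) = stabilizer of T(c/K) in val(K)\<close>
definition stabE :: "('a::field \<Rightarrow> 'g::linordered_ab_group_add) \<Rightarrow> 'a set \<Rightarrow> 'a \<Rightarrow> 'g set" where
  "stabE v K c = {e \<in> value_group v K. (\<lambda>t. e + t) ` cutT v K c = cutT v K c}"

end

theory Submission
  imports Defs
begin

text \<open>
  Let \<open>t \<notin> K\<close> be such that \<open>L\<close> is algebraic over \<open>K(t)\<close>. It suffices to show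
  \<open>E(x/K) \<subseteq> E(y/K)\<close> whenever \<open>x, y \<notin> K\<close> and every \<open>y - b\<close> (\<open>b \<in> K\<close>) is algebraic
  over \<open>K[x]\<close>: clearing denominators and exchanging the roles in a two-variable relation,
  this applies to \<open>(t, w)\<close> and to \<open>(w, t)\<close> for every \<open>w \<notin> K\<close>.

  Let \<open>0 < e \<in> E(x/K)\<close> and suppose \<open>z = y - b\<close> admits no approximation from \<open>K\<close> better
  by \<open>e\<close>, i.e. \<open>v (z - b') < v z + e\<close> for all \<open>b' \<in> K\<close>. Take a relation
  \<open>\<Sum>\<^sub>j Q\<^sub>j(x) z\<^sup>j = 0\<close> with \<open>Q\<^sub>j \<in> K[X]\<close>, \<open>j \<le> n\<close>. As \<open>K\<close> is algebraically closed the \<open>Q\<^sub>j\<close>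
  split, and since \<open>E(x/K)\<close> is a group, \<open>x\<close> has an approximation \<open>s \<in> K\<close> which is
  closer by \<open>(n+1)e\<close> than all roots of the \<open>Q\<^sub>j\<close>; then \<open>Q\<^sub>j(s)\<close> approximates \<open>Q\<^sub>j(x)\<close> to
  relative precision \<open>(n+1)e\<close>. For \<open>g = \<Sum>\<^sub>j Q\<^sub>j(s) Z\<^sup>j \<in> K[Z]\<close> every term of
  \<open>g(z) = - \<Sum>\<^sub>j (Q\<^sub>j(x) - Q\<^sub>j(s)) z\<^sup>j\<close> thus has value at least \<open>v (g z) + e\<close>, because
  splitting \<open>g\<close> over \<open>K\<close> shows that \<open>v (g z)\<close> exceeds the least value of a monomial of
  \<open>g\<close> at \<open>z\<close> by at most \<open>n e\<close>. This contradiction shows that every element of the cut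
  \<open>T(y/K)\<close> is exceeded by \<open>e\<close> within it, so \<open>e \<in> E(y/K)\<close>.
\<close>

text \<open>The value group is only an ordered abelian group, without multiplication by naturals.\<close>
fun nat_mult :: "nat \<Rightarrow> 'a::monoid_add \<Rightarrow> 'a" where
  "nat_mult 0 a = 0"
| "nat_mult (Suc n) a = a + nat_mult n a"

lemma nat_mult_add: "nat_mult (m + n) a = nat_mult m a + nat_mult n a"
  by (induction m) (simp_all add: add.assoc)

lemma nat_mult_nonneg: "(0::'a::ordered_comm_monoid_add) \<le> a \<Longrightarrow> 0 \<le> nat_mult n a"
  by (induction n) simp_all

lemma nat_mult_mono:
  assumes "m \<le> n" "(0::'a::ordered_comm_monoid_add) \<le> a"
  shows "nat_mult m a \<le> nat_mult n a"
proof -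
  obtain k where "n = m + k" using assms(1) le_Suc_ex by blast
  then show ?thesis using nat_mult_nonneg[OF assms(2), of k] by (simp add: nat_mult_add add_increasing2)
qed

section \<open>Valuations\<close>

locale valued_field =
  fixes v :: "'l::field \<Rightarrow> 'g::linordered_ab_group_add"
  assumes valuation: "valuation v"
begin

lemma v_mult: "x \<noteq> 0 \<Longrightarrow> y \<noteq> 0 \<Longrightarrow> v (x * y) = v x + v y"
  using valuation unfolding valuation_def by blast

lemma v_add_ge_min: "x \<noteq> 0 \<Longrightarrow> y \<noteq> 0 \<Longrightarrow> x + y \<noteq> 0 \<Longrightarrow> min (v x) (v y) \<le> v (x + y)"
  using valuation unfolding valuation_def by blast

lemma v_one: "v 1 = 0"
  using v_mult[of 1 1] by simp

lemma v_uminus: "v (- x) = v x"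
proof (cases "x = 0")
  case False
  have "v (-1) = 0"
    using v_mult[of "-1" "-1"] v_one double_zero[of "v (-1)"] by simp
  then show ?thesis using v_mult[of "-1" x] False by simp
qed simp

lemma v_inverse: "x \<noteq> 0 \<Longrightarrow> v (inverse x) = - v x"
  using v_mult[of x "inverse x"] v_one by (simp add: eq_neg_iff_add_eq_0 add.commute)

lemma v_minus_commute: "v (x - y) = v (y - x)"
  by (metis minus_diff_eq v_uminus)

lemma v_add_eq_left:
  assumes "x \<noteq> 0" "y \<noteq> 0" "v x < v y"
  shows "v (x + y) = v x"
proof -
  have "x + y \<noteq> 0"
    using assms v_uminus[of x] by (metis add_eq_0_iff less_irrefl)
  then have "min (v (x + y)) (v y) \<le> v x" and "min (v x) (v y) \<le> v (x + y)"
    using v_add_ge_min[of "x + y" "- y"] v_add_ge_min[of x y] assms by (simp_all add: v_uminus)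
  then show ?thesis using assms(3) by (auto simp: min_def split: if_splits)
qed

text \<open>Values of \<open>0\<close> are meaningless; \<open>a = 0 \<or> C \<le> v a\<close> stands for \<open>C \<le> v a\<close> with \<open>v 0 = \<infinity>\<close>.\<close>
lemma v_add_ge:
  assumes "a = 0 \<or> C \<le> v a" "b = 0 \<or> C \<le> v b"
  shows "a + b = 0 \<or> C \<le> v (a + b)"
proof (cases "a = 0 \<or> b = 0 \<or> a + b = 0")
  case False
  then have "C \<le> min (v a) (v b)" and "min (v a) (v b) \<le> v (a + b)"
    using assms v_add_ge_min[of a b] by simp_all
  then show ?thesis by (blast intro: order_trans)
qed (use assms in auto)

lemma v_sum_ge:
  assumes "finite A" "\<And>i. i \<in> A \<Longrightarrow> f i = 0 \<or> C \<le> v (f i)"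
  shows "sum f A = 0 \<or> C \<le> v (sum f A)"
  using assms
proof (induction A rule: finite_induct)
  case (insert a A)
  then show ?case using v_add_ge[of "f a" C "sum f A"] by simp
qed simp

end

section \<open>Polynomials over a subfield\<close>

lemma algebraic_over_sumI:
  assumes "0 \<in> R" "\<And>i. i \<le> m \<Longrightarrow> c i \<in> R" "(\<Sum>i\<le>m. c i * x ^ i) = 0" "i0 \<le> m" "c i0 \<noteq> 0"
  shows "algebraic_over R x"
proof -
  define p where "p = (\<Sum>i\<le>m. monom (c i) i)"
  have coeff_p: "coeff p i = (if i \<le> m then c i else 0)" for i
    unfolding p_def coeff_sum coeff_monom by simp
  have "p \<noteq> 0" using coeff_p[of i0] assms(4,5) by auto
  moreover have "poly_over R p" using assms(1,2) coeff_p unfolding poly_over_def by simp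
  moreover have "poly p x = 0" using assms(3) unfolding p_def poly_sum poly_monom .
  ultimately show ?thesis unfolding algebraic_over_def by blast
qed

lemma poly_eq_sum_le_degree:
  fixes p :: "'a::comm_semiring_1 poly"
  assumes "degree p \<le> m"
  shows "poly p x = (\<Sum>i\<le>m. coeff p i * x ^ i)"
proof -
  have "poly p x = (\<Sum>i\<le>degree p. coeff p i * x ^ i)"
    by (simp add: poly_altdef)
  also have "\<dots> = (\<Sum>i\<le>m. coeff p i * x ^ i)"
    by (rule sum.mono_neutral_left) (use assms in \<open>auto simp: coeff_eq_0\<close>)
  finally show ?thesis .
qed

definition poly_of_roots :: "'a::comm_ring_1 list \<Rightarrow> 'a poly" where
  "poly_of_roots rs = (\<Prod>a\<leftarrow>rs. [:-a, 1:])"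

lemma poly_of_roots_simps [simp]:
  "poly_of_roots [] = 1"
  "poly_of_roots (a # rs) = [:-a, 1:] * poly_of_roots rs"
  by (simp_all add: poly_of_roots_def)

lemma poly_poly_of_roots: "poly (poly_of_roots rs) x = (\<Prod>a\<leftarrow>rs. x - a)"
  by (induction rs) (simp_all add: algebra_simps)

lemma algebraic_over_mono: "algebraic_over F x \<Longrightarrow> F \<subseteq> F' \<Longrightarrow> algebraic_over F' x"
  unfolding algebraic_over_def poly_over_def by blast

lemma gen_subfield_least: "is_subfield F \<Longrightarrow> S \<subseteq> F \<Longrightarrow> gen_subfield S \<subseteq> F"
  unfolding gen_subfield_def by blast

locale subfield =
  fixes K :: "'l::field set"
  assumes is_subfield: "is_subfield K"
begin

lemma zero_mem: "0 \<in> K" and one_mem: "1 \<in> K"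
  and add_mem: "a \<in> K \<Longrightarrow> b \<in> K \<Longrightarrow> a + b \<in> K"
  and mult_mem: "a \<in> K \<Longrightarrow> b \<in> K \<Longrightarrow> a * b \<in> K"
  and uminus_mem: "a \<in> K \<Longrightarrow> - a \<in> K"
  using is_subfield unfolding is_subfield_def by blast+

lemma inverse_mem: "a \<in> K \<Longrightarrow> inverse a \<in> K"
  using is_subfield zero_mem unfolding is_subfield_def by (cases "a = 0") auto

lemma diff_mem: "a \<in> K \<Longrightarrow> b \<in> K \<Longrightarrow> a - b \<in> K"
  using add_mem uminus_mem by (metis diff_conv_add_uminus)

lemma sum_mem: "finite A \<Longrightarrow> (\<And>i. i \<in> A \<Longrightarrow> f i \<in> K) \<Longrightarrow> sum f A \<in> K"
  by (induction A rule: finite_induct) (auto simp: zero_mem add_mem)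

lemma poly_over_pCons: "poly_over K (pCons a p) \<longleftrightarrow> a \<in> K \<and> poly_over K p"
  unfolding poly_over_def by (metis coeff_pCons_0 coeff_pCons_Suc not0_implies_Suc)

lemma poly_over_0: "poly_over K 0"
  by (simp add: poly_over_def zero_mem)

lemma poly_over_monom: "a \<in> K \<Longrightarrow> poly_over K (monom a n)"
  by (simp add: poly_over_def zero_mem)

lemma poly_over_const: "a \<in> K \<Longrightarrow> poly_over K [:a:]"
  using poly_over_monom[of a 0] by (simp add: monom_0)

lemma poly_over_1: "poly_over K 1"
  using poly_over_const[OF one_mem] by (simp add: one_pCons)

lemma poly_over_add: "poly_over K p \<Longrightarrow> poly_over K q \<Longrightarrow> poly_over K (p + q)"
  by (simp add: poly_over_def add_mem)

lemma poly_over_uminus: "poly_over K p \<Longrightarrow> poly_over K (- p)"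
  by (simp add: poly_over_def uminus_mem)

lemma poly_over_mult: "poly_over K p \<Longrightarrow> poly_over K q \<Longrightarrow> poly_over K (p * q)"
  unfolding poly_over_def coeff_mult by (auto intro!: sum_mem mult_mem)

lemma poly_over_sum: "finite A \<Longrightarrow> (\<And>i. i \<in> A \<Longrightarrow> poly_over K (f i)) \<Longrightarrow> poly_over K (sum f A)"
  by (induction A rule: finite_induct) (auto simp: poly_over_0 poly_over_add)

lemma poly_over_prod: "finite A \<Longrightarrow> (\<And>i. i \<in> A \<Longrightarrow> poly_over K (f i)) \<Longrightarrow> poly_over K (prod f A)"
  by (induction A rule: finite_induct) (auto simp: poly_over_1 poly_over_mult)

lemma poly_mem: "poly_over K p \<Longrightarrow> s \<in> K \<Longrightarrow> poly p s \<in> K"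
  by (induction p) (auto simp: poly_over_pCons zero_mem add_mem mult_mem)

lemma poly_over_synthetic_div: "poly_over K p \<Longrightarrow> c \<in> K \<Longrightarrow> poly_over K (synthetic_div p c)"
  by (induction p) (auto simp: poly_over_pCons poly_over_0 poly_mem)

lemma poly_of_roots_nonzero:
  assumes "set rs \<subseteq> K" "z \<notin> K"
  shows "poly (poly_of_roots rs) z \<noteq> 0"
proof -
  have "0 \<notin> (\<lambda>a. z - a) ` set rs" using assms by auto
  then show ?thesis by (simp add: poly_poly_of_roots prod_list_zero_iff)
qed

lemma algebraic_over_mem: "a \<in> K \<Longrightarrow> algebraic_over K a"
  unfolding algebraic_over_def
  by (intro exI[of _ "[:-a, 1:]"]) (simp add: poly_over_pCons poly_over_0 one_mem uminus_mem)

end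

locale algebraically_closed_subfield = subfield +
  assumes has_root: "poly_over K p \<Longrightarrow> 1 \<le> degree p \<Longrightarrow> \<exists>x\<in>K. poly p x = 0"
begin

lemma poly_over_splits:
  assumes "poly_over K p" "p \<noteq> 0"
  shows "\<exists>\<beta> rs. \<beta> \<in> K \<and> \<beta> \<noteq> 0 \<and> set rs \<subseteq> K \<and> length rs = degree p \<and>
    p = smult \<beta> (poly_of_roots rs)"
  using assms
proof (induction "degree p" arbitrary: p)
  case 0
  then obtain a where a: "p = [:a:]" using degree0_coeffs by metis
  with 0 have "a \<in> K" "a \<noteq> 0" by (auto simp: poly_over_pCons)
  with a show ?case by (intro exI[of _ a] exI[of _ "[]"]) simp
next
  case (Suc n)
  then obtain a where a: "a \<in> K" "poly p a = 0" using has_root[of p] by auto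
  define q where "q = synthetic_div p a"
  have p_eq: "p = [:-a, 1:] * q"
    using synthetic_div_correct'[of a p] a by (simp add: q_def)
  have "degree q = n" using Suc.hyps(2) by (simp add: q_def degree_synthetic_div)
  moreover have "q \<noteq> 0" using p_eq Suc.prems by auto
  moreover have "poly_over K q" using poly_over_synthetic_div Suc.prems a by (simp add: q_def)
  ultimately obtain \<beta> rs where "\<beta> \<in> K" "\<beta> \<noteq> 0" "set rs \<subseteq> K" "length rs = n"
      "q = smult \<beta> (poly_of_roots rs)"
    using Suc.hyps(1)[of q] by blast
  with a p_eq Suc.hyps(2) show ?case
    by (intro exI[of _ \<beta>] exI[of _ "a # rs"]) (simp add: mult_smult_right)
qed

lemma not_algebraic_if_notin:
  assumes "x \<notin> K"
  shows "\<not> algebraic_over K x"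
proof
  assume "algebraic_over K x"
  then obtain p where "p \<noteq> 0" "poly_over K p" "poly p x = 0"
    unfolding algebraic_over_def by blast
  then obtain \<beta> rs where "\<beta> \<noteq> 0" "set rs \<subseteq> K" "p = smult \<beta> (poly_of_roots rs)"
    using poly_over_splits by blast
  with \<open>poly p x = 0\<close> poly_of_roots_nonzero[OF _ assms] show False by simp
qed

end

section \<open>Adjoining one element\<close>

context subfield
begin

definition ring_adjoin :: "'l \<Rightarrow> 'l set" where
  "ring_adjoin x = {poly p x | p. poly_over K p}"

definition field_adjoin :: "'l \<Rightarrow> 'l set" where
  "field_adjoin x = {poly p x / poly q x | p q. poly_over K p \<and> poly_over K q \<and> poly q x \<noteq> 0}"

lemma ring_adjoin_memI: "poly_over K p \<Longrightarrow> poly p x \<in> ring_adjoin x"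
  unfolding ring_adjoin_def by blast

lemma zero_mem_ring_adjoin: "0 \<in> ring_adjoin x"
  using ring_adjoin_memI[OF poly_over_0] by simp

lemma algebraic_over_ring_adjoinE:
  assumes "algebraic_over (ring_adjoin x) z"
  obtains Q n where "\<And>j. poly_over K (Q j)" "(\<Sum>j\<le>n. poly (Q j) x * z ^ j) = 0" "poly (Q n) x \<noteq> 0"
proof -
  obtain p where p: "p \<noteq> 0" "poly_over (ring_adjoin x) p" "poly p z = 0"
    using assms unfolding algebraic_over_def by blast
  have "\<forall>j. \<exists>q. poly_over K q \<and> coeff p j = poly q x"
    using p(2) unfolding poly_over_def ring_adjoin_def by blast
  then obtain Q where Q: "\<And>j. poly_over K (Q j)" "\<And>j. coeff p j = poly (Q j) x"
    by metis
  have "(\<Sum>j\<le>degree p. poly (Q j) x * z ^ j) = 0"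
    using p(3) by (simp add: poly_altdef Q(2))
  moreover have "poly (Q (degree p)) x \<noteq> 0"
    using p(1) Q(2)[of "degree p", symmetric] by simp
  ultimately show ?thesis using that Q(1) by blast
qed

lemma algebraic_over_ring_adjoin_swap:
  assumes "algebraic_over (ring_adjoin x) y" "\<not> algebraic_over K y"
  shows "algebraic_over (ring_adjoin y) x"
proof -
  obtain Q n where Q: "\<And>j. poly_over K (Q j)" and rel: "(\<Sum>j\<le>n. poly (Q j) x * y ^ j) = 0"
    and lead: "poly (Q n) x \<noteq> 0"
    using algebraic_over_ring_adjoinE[OF assms(1)] by blast
  define m where "m = (\<Sum>j\<le>n. degree (Q j))"
  have deg_le: "degree (Q j) \<le> m" if "j \<le> n" for j
    unfolding m_def using that by (intro member_le_sum) auto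
  \<comment> \<open>Regard \<open>\<Sum>\<^sub>j Q\<^sub>j(X) Y\<^sup>j\<close> as a polynomial in \<open>X\<close> whose coefficients \<open>Q'\<^sub>i(Y)\<close> lie in \<open>K[Y]\<close>.\<close>
  define Q' where "Q' i = (\<Sum>j\<le>n. monom (coeff (Q j) i) j)" for i
  have Q'_over: "poly_over K (Q' i)" for i
    unfolding Q'_def using Q by (intro poly_over_sum poly_over_monom) (auto simp: poly_over_def)
  have "(\<Sum>i\<le>m. poly (Q' i) y * x ^ i) = (\<Sum>i\<le>m. \<Sum>j\<le>n. coeff (Q j) i * x ^ i * y ^ j)"
    unfolding Q'_def poly_sum poly_monom by (simp add: sum_distrib_left sum_distrib_right mult_ac)
  also have "\<dots> = (\<Sum>j\<le>n. \<Sum>i\<le>m. coeff (Q j) i * x ^ i * y ^ j)"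
    by (rule sum.swap)
  also have "\<dots> = (\<Sum>j\<le>n. poly (Q j) x * y ^ j)"
    by (intro sum.cong refl) (simp add: poly_eq_sum_le_degree[OF deg_le] sum_distrib_right)
  finally have rel': "(\<Sum>i\<le>m. poly (Q' i) y * x ^ i) = 0" using rel by simp
  define i0 where "i0 = degree (Q n)"
  have "coeff (Q' i0) n = lead_coeff (Q n)"
    unfolding Q'_def coeff_sum coeff_monom i0_def by simp
  then have "Q' i0 \<noteq> 0" using lead by auto
  then have "poly (Q' i0) y \<noteq> 0"
    using assms(2) Q'_over unfolding algebraic_over_def by blast
  moreover have "i0 \<le> m" using deg_le[of n] by (simp add: i0_def)
  ultimately show ?thesis
    using rel' zero_mem_ring_adjoin ring_adjoin_memI[OF Q'_over] by (intro algebraic_over_sumI) auto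
qed

lemma field_adjoin_memI:
  "poly_over K p \<Longrightarrow> poly_over K q \<Longrightarrow> poly q t \<noteq> 0 \<Longrightarrow> poly p t / poly q t \<in> field_adjoin t"
  unfolding field_adjoin_def by blast

lemma poly_mem_field_adjoin: "poly_over K p \<Longrightarrow> poly p t \<in> field_adjoin t"
  using field_adjoin_memI[OF _ poly_over_1] by fastforce

lemma field_adjoin_is_subfield: "is_subfield (field_adjoin t)"
  unfolding is_subfield_def
proof (intro conjI ballI impI)
  show "0 \<in> field_adjoin t" "1 \<in> field_adjoin t"
    using poly_mem_field_adjoin[OF poly_over_0] poly_mem_field_adjoin[OF poly_over_1] by simp_all
next
  fix a b assume "a \<in> field_adjoin t" "b \<in> field_adjoin t"
  then obtain f1 g1 f2 g2 where h: "poly_over K f1" "poly_over K g1" "poly g1 t \<noteq> 0"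
    "a = poly f1 t / poly g1 t" "poly_over K f2" "poly_over K g2" "poly g2 t \<noteq> 0"
    "b = poly f2 t / poly g2 t"
    unfolding field_adjoin_def by blast
  have "a + b = poly (f1 * g2 + f2 * g1) t / poly (g1 * g2) t"
    using h by (simp add: add_frac_eq)
  moreover have "\<dots> \<in> field_adjoin t"
    using h by (intro field_adjoin_memI poly_over_add poly_over_mult) auto
  ultimately show "a + b \<in> field_adjoin t" by simp
  have "a * b = poly (f1 * f2) t / poly (g1 * g2) t"
    using h by simp
  moreover have "\<dots> \<in> field_adjoin t"
    using h by (intro field_adjoin_memI poly_over_mult) auto
  ultimately show "a * b \<in> field_adjoin t" by simp
next
  fix a assume "a \<in> field_adjoin t"
  then obtain f g where h: "poly_over K f" "poly_over K g" "poly g t \<noteq> 0" "a = poly f t / poly g t"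
    unfolding field_adjoin_def by blast
  have "- a = poly (- f) t / poly g t" using h by simp
  moreover have "\<dots> \<in> field_adjoin t"
    using h by (intro field_adjoin_memI poly_over_uminus)
  ultimately show "- a \<in> field_adjoin t" by simp
  assume "a \<noteq> 0"
  then have "inverse a = poly g t / poly f t" "poly f t \<noteq> 0" using h by auto
  then show "inverse a \<in> field_adjoin t" using h by (simp add: field_adjoin_memI)
qed

lemma gen_subfield_subset_field_adjoin:
  assumes "b \<in> K"
  shows "gen_subfield (insert t K) \<subseteq> field_adjoin (t - b)"
proof (rule gen_subfield_least[OF field_adjoin_is_subfield])
  have "t \<in> field_adjoin (t - b)"
    using poly_mem_field_adjoin[of "[:b, 1:]" "t - b"] assms
    by (simp add: poly_over_pCons poly_over_0 one_mem)
  moreover have "a \<in> field_adjoin (t - b)" if "a \<in> K" for a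
    using poly_mem_field_adjoin[of "[:a:]" "t - b"] that by (simp add: poly_over_const)
  ultimately show "insert t K \<subseteq> field_adjoin (t - b)" by blast
qed

lemma algebraic_over_ring_adjoin:
  assumes "algebraic_over (field_adjoin t) z"
  shows "algebraic_over (ring_adjoin t) z"
proof -
  obtain p where p: "p \<noteq> 0" "poly_over (field_adjoin t) p" "poly p z = 0"
    using assms unfolding algebraic_over_def by blast
  have "\<forall>i. \<exists>f g. poly_over K f \<and> poly_over K g \<and> poly g t \<noteq> 0 \<and>
      coeff p i = poly f t / poly g t"
    using p(2) unfolding poly_over_def field_adjoin_def by fastforce
  then obtain F G where FG: "\<And>i. poly_over K (F i)" "\<And>i. poly_over K (G i)"
      "\<And>i. poly (G i) t \<noteq> 0" "\<And>i. coeff p i = poly (F i) t / poly (G i) t"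
    by metis
  define n where "n = degree p"
  define D where "D = (\<Prod>k\<le>n. poly (G k) t)"
  define Q where "Q j = F j * (\<Prod>k\<in>{..n} - {j}. G k)" for j
  have "D \<noteq> 0" unfolding D_def using FG(3) by simp
  have Q: "poly (Q j) t = coeff p j * D" if "j \<le> n" for j
  proof -
    have "D = poly (G j) t * (\<Prod>k\<in>{..n} - {j}. poly (G k) t)"
      unfolding D_def using that by (simp add: prod.remove)
    then show ?thesis
      unfolding Q_def using FG(3,4)[of j] by (simp add: poly_prod)
  qed
  have "(\<Sum>j\<le>n. poly (Q j) t * z ^ j) = (\<Sum>j\<le>n. D * (coeff p j * z ^ j))"
    by (intro sum.cong) (simp_all add: Q)
  also have "\<dots> = D * poly p z"
    by (simp add: poly_altdef n_def sum_distrib_left)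
  finally have "(\<Sum>j\<le>n. poly (Q j) t * z ^ j) = D * poly p z" .
  moreover have "poly (Q n) t \<noteq> 0" using Q[of n] \<open>D \<noteq> 0\<close> p(1) by (simp add: n_def)
  moreover have "poly (Q j) t \<in> ring_adjoin t" for j
    unfolding Q_def using FG(1,2) by (intro ring_adjoin_memI poly_over_mult poly_over_prod) auto
  ultimately show ?thesis
    using p(3) zero_mem_ring_adjoin by (intro algebraic_over_sumI[of _ n _ _ n]) auto
qed

end

section \<open>Values of split polynomials\<close>

context valued_field
begin

definition rel_approx :: "'g \<Rightarrow> 'l \<Rightarrow> 'l \<Rightarrow> bool" where
  "rel_approx d a b \<longleftrightarrow> b \<noteq> 0 \<and> (a = b \<or> v b + d \<le> v (a - b))"

lemma rel_approx_v_eq: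
  assumes "rel_approx d a b" "0 < d"
  shows "a \<noteq> 0 \<and> v a = v b"
proof (cases "a = b")
  case False
  have b: "b \<noteq> 0" and close: "v b + d \<le> v (a - b)"
    using assms(1) False unfolding rel_approx_def by auto
  have "v b < v b + d" using assms(2) by simp
  then have "v b < v (a - b)" using close by (rule less_le_trans)
  moreover from this b False have "a - b \<noteq> 0" "a \<noteq> 0"
    using v_uminus[of b] by auto
  ultimately show ?thesis using b v_add_eq_left[of b "a - b"] by simp
qed (use assms in \<open>simp add: rel_approx_def\<close>)

lemma rel_approx_mult:
  assumes ab: "rel_approx d a b" and ab': "rel_approx d a' b'" and "0 < d"
  shows "rel_approx d (a * a') (b * b')"
proof -
  have b: "b \<noteq> 0" "b' \<noteq> 0" and a': "a' \<noteq> 0" "v a' = v b'"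
    using ab ab' rel_approx_v_eq[OF ab' \<open>0 < d\<close>] unfolding rel_approx_def by auto
  have "(a - b) * a' = 0 \<or> v (b * b') + d \<le> v ((a - b) * a')"
  proof (cases "a = b")
    case False
    then have "v b + d + v b' \<le> v (a - b) + v a'" using ab a' unfolding rel_approx_def by simp
    with False a' b show ?thesis by (simp add: v_mult add_ac)
  qed simp
  moreover have "b * (a' - b') = 0 \<or> v (b * b') + d \<le> v (b * (a' - b'))"
  proof (cases "a' = b'")
    case False
    then have "v b + (v b' + d) \<le> v b + v (a' - b')" using ab' unfolding rel_approx_def by simp
    with False b show ?thesis by (simp add: v_mult add_ac)
  qed simp
  ultimately have "(a - b) * a' + b * (a' - b') = 0 \<or> v (b * b') + d \<le> v ((a - b) * a' + b * (a' - b'))"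
    by (rule v_add_ge)
  moreover have "(a - b) * a' + b * (a' - b') = a * a' - b * b'" by algebra
  ultimately show ?thesis using b unfolding rel_approx_def by simp
qed

lemma rel_approx_prod_list:
  assumes "\<And>x. x \<in> set xs \<Longrightarrow> rel_approx d (f x) (g x)" "0 < d"
  shows "rel_approx d (\<Prod>x\<leftarrow>xs. f x) (\<Prod>x\<leftarrow>xs. g x)"
  using assms
proof (induction xs)
  case (Cons x xs)
  then show ?case using rel_approx_mult[of d "f x" "g x"] by simp
qed (simp add: rel_approx_def)

lemma rel_approx_diff:
  assumes "x \<noteq> a" "0 < d" "v (x - a) + d \<le> v (x - s)"
  shows "rel_approx d (x - a) (s - a)"
proof (cases "s = x")
  case True
  then show ?thesis using assms(1) by (simp add: rel_approx_def)
next
  case False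
  have "v (x - a) < v (x - a) + d" using assms(2) by simp
  then have "v (x - a) < v (x - s)" using assms(3) by (rule less_le_trans)
  then have less: "v (x - a) < v (s - x)" by (simp add: v_minus_commute)
  then have "v ((x - a) + (s - x)) = v (x - a)"
    using assms(1) False by (intro v_add_eq_left) auto
  moreover have "(x - a) + (s - x) = s - a" by simp
  ultimately have "v (s - a) = v (x - a)" by simp
  moreover have "s \<noteq> a" using less by (auto simp: v_minus_commute)
  ultimately show ?thesis using assms(3) unfolding rel_approx_def by simp
qed

text \<open>\<open>min_val \<mu> r = min \<mu> (v r)\<close>, with \<open>v 0\<close> read as \<open>+\<infinity>\<close>.\<close>
definition min_val :: "'g \<Rightarrow> 'l \<Rightarrow> 'g" where
  "min_val \<mu> r = (if r = 0 then \<mu> else min \<mu> (v r))"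

text \<open>Multiplicativity of the Gauss norm of radius \<open>v z\<close>, one linear factor at a time.\<close>
lemma v_monomial_poly_of_roots_ge:
  assumes "z \<noteq> 0" "coeff (poly_of_roots rs) j \<noteq> 0"
  shows "(\<Sum>r\<leftarrow>rs. min_val (v z) r) \<le> v (coeff (poly_of_roots rs) j * z ^ j)"
  using assms(2)
proof (induction rs arbitrary: j)
  case Nil
  then show ?case by (cases j) (simp_all add: v_one)
next
  case (Cons a rs)
  define h where "h = poly_of_roots rs"
  define B where "B = (\<Sum>r\<leftarrow>rs. min_val (v z) r)"
  define T1 where "T1 = (if j = 0 then 0 else coeff h (j - 1) * z ^ j)"
  define T2 where "T2 = - a * (coeff h j * z ^ j)"
  have split: "coeff (poly_of_roots (a # rs)) j * z ^ j = T1 + T2"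
    by (cases j) (simp_all add: T1_def T2_def h_def algebra_simps)
  have "T1 = 0 \<or> B + min_val (v z) a \<le> v T1"
  proof (cases j)
    case (Suc i)
    show ?thesis
    proof (cases "coeff h i = 0")
      case False
      then have "B \<le> v (coeff h i * z ^ i)" using Cons.IH by (simp add: h_def B_def)
      moreover have "min_val (v z) a \<le> v z" by (simp add: min_val_def)
      ultimately have "B + min_val (v z) a \<le> v (coeff h i * z ^ i) + v z" by (rule add_mono)
      then show ?thesis
        using False Suc assms(1) by (simp add: T1_def v_mult mult_ac add_ac)
    qed (simp add: T1_def Suc)
  qed (simp add: T1_def)
  moreover have "T2 = 0 \<or> B + min_val (v z) a \<le> v T2"
  proof (cases "a = 0 \<or> coeff h j = 0")
    case False
    then have "B \<le> v (coeff h j * z ^ j)" using Cons.IH by (simp add: h_def B_def)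
    moreover have "min_val (v z) a \<le> v a" using False by (simp add: min_val_def)
    ultimately have "B + min_val (v z) a \<le> v (coeff h j * z ^ j) + v a" by (rule add_mono)
    then show ?thesis
      using False assms(1) by (simp add: T2_def v_mult v_uminus add_ac)
  qed (auto simp: T2_def)
  ultimately have "B + min_val (v z) a \<le> v (T1 + T2)"
    using v_add_ge Cons.prems split assms(1) by fastforce
  then show ?case using split by (simp add: B_def add.commute)
qed

end

section \<open>Cuts and their stabilizers\<close>

locale valued_subfield = valued_field v + subfield K
  for v :: "'l::field \<Rightarrow> 'g::linordered_ab_group_add" and K :: "'l set"
begin

lemma zero_in_value_group: "0 \<in> value_group v K"
  unfolding value_group_def using v_one one_mem by (auto intro!: image_eqI[of _ _ 1])

lemma value_group_add:
  assumes "a \<in> value_group v K" "b \<in> value_group v K"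
  shows "a + b \<in> value_group v K"
proof -
  obtain x y where "x \<in> K" "x \<noteq> 0" "y \<in> K" "y \<noteq> 0" "a = v x" "b = v y"
    using assms unfolding value_group_def by auto
  then show ?thesis unfolding value_group_def using v_mult[of x y] mult_mem[of x y]
    by (intro image_eqI[of _ _ "x * y"]) auto
qed

lemma value_group_uminus:
  assumes "a \<in> value_group v K"
  shows "- a \<in> value_group v K"
proof -
  obtain x where "x \<in> K" "x \<noteq> 0" "a = v x"
    using assms unfolding value_group_def by auto
  then show ?thesis unfolding value_group_def using v_inverse[of x] inverse_mem[of x]
    by (intro image_eqI[of _ _ "inverse x"]) auto
qed

lemma stabE_add:
  assumes "e \<in> stabE v K x" "f \<in> stabE v K x"
  shows "e + f \<in> stabE v K x"
proof -
  have "(\<lambda>t. e + f + t) ` cutT v K x = (\<lambda>t. e + t) ` ((\<lambda>t. f + t) ` cutT v K x)"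
    by (simp add: image_image add.assoc)
  then show ?thesis using assms value_group_add unfolding stabE_def by auto
qed

lemma stabE_uminus:
  assumes "e \<in> stabE v K x"
  shows "- e \<in> stabE v K x"
proof -
  have "(\<lambda>t. - e + t) ` cutT v K x = (\<lambda>t. - e + t) ` ((\<lambda>t. e + t) ` cutT v K x)"
    using assms unfolding stabE_def by simp
  also have "\<dots> = cutT v K x" by (simp add: image_image)
  finally show ?thesis using assms value_group_uminus unfolding stabE_def by blast
qed

lemma zero_in_stabE: "0 \<in> stabE v K x"
  by (simp add: stabE_def zero_in_value_group)

lemma stabE_nat_mult: "e \<in> stabE v K x \<Longrightarrow> nat_mult n e \<in> stabE v K x"
  by (induction n) (simp_all add: zero_in_stabE stabE_add)

lemma exists_closer_than_all:
  assumes "finite A" "A \<subseteq> K" "e \<in> stabE v K x"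
  shows "\<exists>s\<in>K. \<forall>a\<in>A. v (x - a) + e \<le> v (x - s)"
proof (cases "A = {}")
  case False
  define M where "M = Max ((\<lambda>a. v (x - a)) ` A)"
  have "M \<in> (\<lambda>a. v (x - a)) ` A" using assms(1) False by (simp add: M_def)
  moreover have "\<forall>a'\<in>A. v (x - a') \<le> M" using assms(1) by (simp add: M_def)
  ultimately obtain a where "a \<in> A" "\<forall>a'\<in>A. v (x - a') \<le> v (x - a)" by auto
  moreover have "v (x - a) + e \<in> cutT v K x"
  proof -
    have "v (x - a) \<in> cutT v K x" using \<open>a \<in> A\<close> assms(2) unfolding cutT_def by blast
    then show ?thesis using assms(3) unfolding stabE_def by (auto simp: add.commute)
  qed
  then obtain s where "s \<in> K" "v (x - s) = v (x - a) + e" unfolding cutT_def by auto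
  ultimately show ?thesis by (metis add_right_mono)
qed (use zero_mem in blast)

lemma cutT_downward_closed:
  assumes "y \<notin> K" "b \<in> K" "\<delta> \<in> value_group v K" "\<delta> \<le> v (y - b)"
  shows "\<delta> \<in> cutT v K y"
proof (cases "\<delta> = v (y - b)")
  case False
  obtain a where a: "a \<in> K" "a \<noteq> 0" "v a = \<delta>" using assms(3) unfolding value_group_def by auto
  have "y - b \<noteq> 0" using assms(1,2) by auto
  then have "v (- a + (y - b)) = v (- a)"
    using a assms(4) False by (intro v_add_eq_left) (auto simp: v_uminus)
  then have "v (y - (b + a)) = \<delta>" using a by (simp add: v_uminus algebra_simps)
  then show ?thesis unfolding cutT_def using add_mem[OF assms(2) a(1)] by blast
qed (use assms in \<open>auto simp: cutT_def\<close>)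

lemma v_diff_in_value_group:
  assumes "y \<notin> K" "b \<in> K" "b' \<in> K" "v (y - b) < v (y - b')"
  shows "v (y - b) \<in> value_group v K"
proof -
  have "y - b \<noteq> 0" "y - b' \<noteq> 0" using assms(1-3) by auto
  then have "v ((y - b) + - (y - b')) = v (y - b)"
    using assms(4) v_minus_commute[of b' y] by (intro v_add_eq_left) auto
  moreover have "(y - b) + - (y - b') = b' - b" by simp
  moreover have "b' - b \<noteq> 0" using assms(4) by auto
  ultimately show ?thesis
    unfolding value_group_def using diff_mem[OF assms(3,2)] by (auto intro!: image_eqI[of _ _ "b' - b"])
qed

lemma stabE_if_improvable:
  assumes y: "y \<notin> K" and e: "e \<in> value_group v K" "0 < e"
    and improve: "\<And>b. b \<in> K \<Longrightarrow> \<exists>b'\<in>K. v (y - b) + e \<le> v (y - b')"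
  shows "e \<in> stabE v K y"
proof -
  have in_group: "v (y - b) \<in> value_group v K" if b: "b \<in> K" for b
  proof -
    obtain b' where "b' \<in> K" "v (y - b) + e \<le> v (y - b')" using improve[OF b] by blast
    moreover have "v (y - b) < v (y - b) + e" using e(2) by simp
    ultimately show ?thesis using v_diff_in_value_group[OF y b] by (meson less_le_trans)
  qed
  have up: "e + v (y - b) \<in> cutT v K y" if b: "b \<in> K" for b
  proof -
    obtain b' where "b' \<in> K" "v (y - b) + e \<le> v (y - b')" using improve[OF b] by blast
    then show ?thesis
      using cutT_downward_closed[OF y] value_group_add[OF e(1) in_group[OF b]] by (simp add: add.commute)
  qed
  have down: "- e + v (y - b) \<in> cutT v K y" if "b \<in> K" for b
    using cutT_downward_closed[OF y that] value_group_add[OF value_group_uminus[OF e(1)] in_group[OF that]]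
      e(2) by simp
  have "(\<lambda>t. e + t) ` cutT v K y \<subseteq> cutT v K y" using up unfolding cutT_def by auto
  moreover have "cutT v K y \<subseteq> (\<lambda>t. e + t) ` cutT v K y"
  proof
    fix w assume "w \<in> cutT v K y"
    then have "- e + w \<in> cutT v K y" using down unfolding cutT_def by auto
    then show "w \<in> (\<lambda>t. e + t) ` cutT v K y" by (rule rev_image_eqI) simp
  qed
  ultimately have "(\<lambda>t. e + t) ` cutT v K y = cutT v K y" by blast
  then show ?thesis using e(1) unfolding stabE_def by blast
qed

end

section \<open>Improving approximations\<close>

context valued_subfield
begin

lemma v_diff_le_min_val:
  assumes "z \<notin> K" "r \<in> K" "\<forall>b\<in>K. v (z - b) < v z + e"
  shows "v (z - r) \<le> min_val (v z) r + e"
proof -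
  have "v (z - 0) < v z + e" using assms(3) zero_mem by blast
  then have "0 < e" by simp
  have "z \<noteq> 0" using assms(1) zero_mem by auto
  consider "r = 0" | "r \<noteq> 0" "v r < v z" | "r \<noteq> 0" "v z \<le> v r" using not_less by blast
  then show ?thesis
  proof cases
    case 1
    then show ?thesis using \<open>0 < e\<close> by (simp add: min_val_def)
  next
    case 2
    then have "v (- r + z) = v (- r)" using \<open>z \<noteq> 0\<close> by (intro v_add_eq_left) (auto simp: v_uminus)
    then show ?thesis using 2 \<open>0 < e\<close> by (simp add: min_val_def v_uminus)
  next
    case 3
    then show ?thesis using assms(2,3) by (simp add: min_val_def min_absorb1 less_imp_le)
  qed
qed

lemma v_poly_of_roots_le:
  assumes "z \<notin> K" "set rs \<subseteq> K" "\<forall>b\<in>K. v (z - b) < v z + e"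
  shows "v (poly (poly_of_roots rs) z) \<le> (\<Sum>r\<leftarrow>rs. min_val (v z) r) + nat_mult (length rs) e"
  using assms(2)
proof (induction rs)
  case (Cons a rs)
  have "poly (poly_of_roots rs) z \<noteq> 0" "z - a \<noteq> 0"
    using Cons.prems assms(1) poly_of_roots_nonzero by auto
  moreover have "poly (poly_of_roots (a # rs)) z = (z - a) * poly (poly_of_roots rs) z"
    by (simp add: algebra_simps)
  ultimately have "v (poly (poly_of_roots (a # rs)) z) = v (z - a) + v (poly (poly_of_roots rs) z)"
    by (simp add: v_mult)
  also have "\<dots> \<le> (min_val (v z) a + e) + ((\<Sum>r\<leftarrow>rs. min_val (v z) r) + nat_mult (length rs) e)"
    using Cons v_diff_le_min_val[OF assms(1) _ assms(3)] by (intro add_mono) auto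
  finally show ?case by (simp add: add_ac)
qed (simp add: v_one)

end

locale valued_alg_closed = valued_subfield v K + algebraically_closed_subfield K
  for v :: "'l::field \<Rightarrow> 'g::linordered_ab_group_add" and K :: "'l set"
begin

lemma v_poly_le_monomial:
  assumes g: "poly_over K g" "g \<noteq> 0" and z: "z \<notin> K"
    and no_better: "\<forall>b\<in>K. v (z - b) < v z + e" and coeff: "coeff g j \<noteq> 0"
  shows "v (poly g z) \<le> v (coeff g j * z ^ j) + nat_mult (degree g) e"
proof -
  obtain \<beta> rs where \<beta>: "\<beta> \<noteq> 0" and rs: "set rs \<subseteq> K" "length rs = degree g"
    and g_eq: "g = smult \<beta> (poly_of_roots rs)"
    using poly_over_splits[OF g] by blast
  have "z \<noteq> 0" using z zero_mem by auto
  have c: "coeff (poly_of_roots rs) j \<noteq> 0" using coeff g_eq by simp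
  have "v (poly g z) = v \<beta> + v (poly (poly_of_roots rs) z)"
    using \<beta> poly_of_roots_nonzero[OF rs(1) z] by (simp add: g_eq v_mult)
  also have "\<dots> \<le> v \<beta> + ((\<Sum>r\<leftarrow>rs. min_val (v z) r) + nat_mult (degree g) e)"
    using v_poly_of_roots_le[OF z rs(1) no_better] rs(2) by simp
  also have "\<dots> \<le> v \<beta> + (v (coeff (poly_of_roots rs) j * z ^ j) + nat_mult (degree g) e)"
    using v_monomial_poly_of_roots_ge[OF \<open>z \<noteq> 0\<close> c] by simp
  also have "\<dots> = v (coeff g j * z ^ j) + nat_mult (degree g) e"
    using \<beta> c \<open>z \<noteq> 0\<close> by (simp add: g_eq v_mult mult.assoc add.assoc)
  finally show ?thesis .
qed

lemma rel_approx_poly: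
  assumes x: "x \<notin> K" and "s \<in> K" "0 < d" and Q: "poly_over K Q" "Q \<noteq> 0"
    and close: "\<forall>a\<in>K. poly Q a = 0 \<longrightarrow> v (x - a) + d \<le> v (x - s)"
  shows "rel_approx d (poly Q x) (poly Q s)"
proof -
  obtain \<beta> rs where \<beta>: "\<beta> \<noteq> 0" and rs: "set rs \<subseteq> K" and Q_eq: "Q = smult \<beta> (poly_of_roots rs)"
    using poly_over_splits[OF Q] by blast
  have "rel_approx d (x - a) (s - a)" if "a \<in> set rs" for a
  proof (rule rel_approx_diff)
    have "poly Q a = 0"
      using that by (simp add: Q_eq poly_poly_of_roots prod_list_zero_iff)
    then show "v (x - a) + d \<le> v (x - s)" using close rs that by blast
  qed (use x rs that \<open>0 < d\<close> in auto)
  then have "rel_approx d (\<Prod>a\<leftarrow>rs. x - a) (\<Prod>a\<leftarrow>rs. s - a)"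
    using rel_approx_prod_list \<open>0 < d\<close> by blast
  moreover have "rel_approx d \<beta> \<beta>" using \<beta> by (simp add: rel_approx_def)
  ultimately show ?thesis
    using rel_approx_mult \<open>0 < d\<close> by (simp add: Q_eq poly_poly_of_roots)
qed

lemma simultaneous_rel_approx:
  assumes x: "x \<notin> K" and d: "0 < d" "d \<in> stabE v K x" and "finite J"
    and Q: "\<And>j. j \<in> J \<Longrightarrow> poly_over K (Q j) \<and> Q j \<noteq> 0"
  obtains s where "s \<in> K" "\<And>j. j \<in> J \<Longrightarrow> rel_approx d (poly (Q j) x) (poly (Q j) s)"
proof -
  define A where "A = K \<inter> (\<Union>j\<in>J. {a. poly (Q j) a = 0})"
  have "finite A" unfolding A_def using \<open>finite J\<close> Q poly_roots_finite by blast
  moreover have "A \<subseteq> K" unfolding A_def by blast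
  ultimately obtain s where s: "s \<in> K" and close: "\<forall>a\<in>A. v (x - a) + d \<le> v (x - s)"
    using exists_closer_than_all[OF _ _ d(2)] by blast
  show ?thesis
  proof (rule that[OF s])
    fix j assume "j \<in> J"
    then have "\<forall>a\<in>K. poly (Q j) a = 0 \<longrightarrow> v (x - a) + d \<le> v (x - s)"
      using close unfolding A_def by blast
    then show "rel_approx d (poly (Q j) x) (poly (Q j) s)"
      using rel_approx_poly[OF x s d(1)] Q[OF \<open>j \<in> J\<close>] by blast
  qed
qed

lemma v_perturbed_monomial_gt:
  assumes g: "poly_over K g" "g \<noteq> 0" "degree g \<le> n" and z: "z \<notin> K"
    and no_better: "\<forall>b\<in>K. v (z - b) < v z + e" and "0 < e"
    and approx: "rel_approx (nat_mult (Suc n) e) a (coeff g j)"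
  shows "(a - coeff g j) * z ^ j = 0 \<or> v (poly g z) + e \<le> v ((a - coeff g j) * z ^ j)"
proof (cases "a = coeff g j")
  case False
  have c: "coeff g j \<noteq> 0" "v (coeff g j) + nat_mult (Suc n) e \<le> v (a - coeff g j)"
    using approx False by (auto simp: rel_approx_def)
  have "z \<noteq> 0" using z zero_mem by auto
  have "v (poly g z) + e \<le> v (coeff g j * z ^ j) + (nat_mult (degree g) e + e)"
    using v_poly_le_monomial[OF g(1,2) z no_better c(1)] by (simp add: add.assoc[symmetric])
  also have "\<dots> \<le> v (coeff g j * z ^ j) + nat_mult (Suc n) e"
    using nat_mult_mono[of "Suc (degree g)" "Suc n" e] g(3) \<open>0 < e\<close> by (simp add: add.commute)
  also have "\<dots> \<le> v ((a - coeff g j) * z ^ j)"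
    using c False \<open>z \<noteq> 0\<close> by (simp add: v_mult add_ac)
  finally show ?thesis ..
qed simp

lemma poly_relation_nonzero:
  assumes Q: "\<And>j. poly_over K (Q j)" and lead: "poly (Q n) x \<noteq> 0" and "s \<in> K"
    and z: "z \<notin> K" and no_better: "\<forall>b\<in>K. v (z - b) < v z + e" and "0 < e"
    and approx: "\<And>j. j \<le> n \<Longrightarrow> Q j \<noteq> 0 \<Longrightarrow> rel_approx (nat_mult (Suc n) e) (poly (Q j) x) (poly (Q j) s)"
  shows "(\<Sum>j\<le>n. poly (Q j) x * z ^ j) \<noteq> 0"
proof
  assume rel: "(\<Sum>j\<le>n. poly (Q j) x * z ^ j) = 0"
  \<comment> \<open>\<open>g\<close> is the relation with \<open>x\<close> replaced by its approximation \<open>s \<in> K\<close>.\<close>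
  define g where "g = (\<Sum>j\<le>n. monom (poly (Q j) s) j)"
  have coeff_g: "coeff g j = (if j \<le> n then poly (Q j) s else 0)" for j
    unfolding g_def coeff_sum coeff_monom by simp
  have g_over: "poly_over K g"
    unfolding g_def using Q \<open>s \<in> K\<close> by (intro poly_over_sum poly_over_monom poly_mem) auto
  have "degree g \<le> n"
    unfolding g_def by (intro degree_sum_le) (auto intro: order_trans[OF degree_monom_le])
  have "Q n \<noteq> 0" using lead by auto
  then have "coeff g n \<noteq> 0" using approx[of n] coeff_g[of n] by (simp add: rel_approx_def)
  then have "g \<noteq> 0" by auto
  then have "poly g z \<noteq> 0"
    using not_algebraic_if_notin[OF z] g_over unfolding algebraic_over_def by blast
  define D where "D j = poly (Q j) x - poly (Q j) s" for j
  have "poly g z = (\<Sum>j\<le>n. poly (Q j) s * z ^ j) - (\<Sum>j\<le>n. poly (Q j) x * z ^ j)"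
    using rel unfolding g_def poly_sum poly_monom by simp
  also have "\<dots> = - (\<Sum>j\<le>n. D j * z ^ j)"
    by (simp add: D_def sum_subtractf algebra_simps)
  finally have g_z: "poly g z = - (\<Sum>j\<le>n. D j * z ^ j)" .
  have "D j * z ^ j = 0 \<or> v (poly g z) + e \<le> v (D j * z ^ j)" if "j \<le> n" for j
  proof (cases "Q j = 0")
    case False
    then have "rel_approx (nat_mult (Suc n) e) (poly (Q j) x) (coeff g j)"
      using approx[OF that] coeff_g[of j] that by simp
    from v_perturbed_monomial_gt[OF g_over \<open>g \<noteq> 0\<close> \<open>degree g \<le> n\<close> z no_better \<open>0 < e\<close> this]
    show ?thesis using coeff_g[of j] that by (simp add: D_def)
  qed (simp add: D_def)
  then have "(\<Sum>j\<le>n. D j * z ^ j) = 0 \<or> v (poly g z) + e \<le> v (\<Sum>j\<le>n. D j * z ^ j)"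
    using v_sum_ge[of "{..n}" "\<lambda>j. D j * z ^ j" "v (poly g z) + e"] by simp
  then have "v (poly g z) + e \<le> v (poly g z)"
    using g_z \<open>poly g z \<noteq> 0\<close> by (simp add: v_uminus)
  then show False using \<open>0 < e\<close> by simp
qed

lemma exists_better_approximation:
  assumes e: "0 < e" "e \<in> stabE v K x" and x: "x \<notin> K" and z: "z \<notin> K"
    and alg: "algebraic_over (ring_adjoin x) z"
  shows "\<exists>b\<in>K. v z + e \<le> v (z - b)"
proof (rule ccontr)
  assume "\<not> ?thesis"
  then have no_better: "\<forall>b\<in>K. v (z - b) < v z + e" by (auto simp: not_le)
  obtain Q n where Q: "\<And>j. poly_over K (Q j)" and rel: "(\<Sum>j\<le>n. poly (Q j) x * z ^ j) = 0"
    and lead: "poly (Q n) x \<noteq> 0"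
    using algebraic_over_ring_adjoinE[OF alg] by blast
  define d where "d = nat_mult (Suc n) e"
  have d: "0 < d" "d \<in> stabE v K x"
    using e(1) nat_mult_nonneg[of e n] stabE_nat_mult[OF e(2), of "Suc n"]
    by (simp_all only: d_def) (simp add: add_pos_nonneg)
  obtain s where "s \<in> K"
    and approx: "\<And>j. j \<in> {j. j \<le> n \<and> Q j \<noteq> 0} \<Longrightarrow> rel_approx d (poly (Q j) x) (poly (Q j) s)"
    by (rule simultaneous_rel_approx[OF x d, where J = "{j. j \<le> n \<and> Q j \<noteq> 0}" and Q = Q])
      (simp_all add: Q)
  have "(\<Sum>j\<le>n. poly (Q j) x * z ^ j) \<noteq> 0"
    using poly_relation_nonzero[of Q n x s z e, OF Q lead \<open>s \<in> K\<close> z no_better e(1)] approx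
    unfolding d_def by blast
  with rel show False by contradiction
qed

lemma stabE_mono:
  assumes x: "x \<notin> K" and y: "y \<notin> K"
    and alg: "\<And>b. b \<in> K \<Longrightarrow> algebraic_over (ring_adjoin x) (y - b)"
  shows "stabE v K x \<subseteq> stabE v K y"
proof -
  have pos: "e \<in> stabE v K y" if e: "e \<in> stabE v K x" "0 < e" for e
  proof (rule stabE_if_improvable[OF y])
    show "e \<in> value_group v K" using e(1) unfolding stabE_def by blast
    fix b assume b: "b \<in> K"
    have "y - b \<notin> K" using y b add_mem[of "y - b" b] by auto
    then obtain b' where "b' \<in> K" "v (y - b) + e \<le> v (y - b - b')"
      using exists_better_approximation[OF e(2,1) x _ alg[OF b]] by blast
    then show "\<exists>b'\<in>K. v (y - b) + e \<le> v (y - b')"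
      using add_mem[OF b] by (intro bexI[of _ "b + b'"]) (simp_all add: diff_diff_eq)
  qed (use e in auto)
  show ?thesis
  proof
    fix e assume e: "e \<in> stabE v K x"
    consider "e = 0" | "0 < e" | "0 < - e" by (cases e "0::'g" rule: linorder_cases) auto
    then show "e \<in> stabE v K y"
    proof cases
      case 3
      then have "- e \<in> stabE v K y" using pos stabE_uminus[OF e] by blast
      then show ?thesis using stabE_uminus[of "- e" y] by simp
    qed (use zero_in_stabE pos e in auto)
  qed
qed

end

theorem lemma7p11:
  fixes v :: "'l::field \<Rightarrow> 'g::linordered_ab_group_add"
    and K :: "'l set" and c d :: 'l
  assumes "valuation v"
    and "alg_closed_subfield K"
    and "trdeg_one_over K"
    and "c \<notin> K" and "d \<notin> K"
  shows "stabE v K c = stabE v K d"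
proof -
  interpret valued_alg_closed v K
    using assms(1,2) unfolding alg_closed_subfield_def by unfold_locales auto
  obtain t where t_transc: "\<not> algebraic_over K t"
    and t_gen: "\<And>x. algebraic_over (gen_subfield (insert t K)) x"
    using assms(3) unfolding trdeg_one_over_def by blast
  have t: "t \<notin> K" using t_transc algebraic_over_mem by blast
  have "stabE v K w = stabE v K t" if w: "w \<notin> K" for w
  proof
    have "algebraic_over (ring_adjoin (t - b)) w" if "b \<in> K" for b
      using t_gen[of w] gen_subfield_subset_field_adjoin[OF that]
      by (blast intro: algebraic_over_ring_adjoin algebraic_over_mono)
    then show "stabE v K w \<subseteq> stabE v K t"
      using stabE_mono[OF w t] algebraic_over_ring_adjoin_swap not_algebraic_if_notin[OF w] by blast
    have "algebraic_over (ring_adjoin t) (w - b)" for b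
      using t_gen[of "w - b"] gen_subfield_subset_field_adjoin[OF zero_mem, of t]
      by (auto intro: algebraic_over_ring_adjoin algebraic_over_mono)
    then show "stabE v K t \<subseteq> stabE v K w" using stabE_mono[OF t w] by blast
  qed
  then show ?thesis using assms(4,5) by simp
qed

end
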